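(* For every integer $k>9$, every subcubic graph $G$ with $\operatorname{tww}(G)\geq k$ that has minimal order among all subcubic graphs with twin-width at least $k$ has girth at least $5$.
   Context: All graphs are finite and simple. A graph is subcubic if its maximum degree is at most $3$. The girth is the length of a shortest cycle. A trigraph is a graph whose edges are each colored red or black; a graph is viewed as a trigraph with all edges black; the red degree of a vertex is the number of red edges incident to it. For a partition $\mathcal{P}$ of $V(G)$, the quotient trigraph $G/\mathcal{P}$ has vertex set $\mathcal{P}$; two distinct parts $U,W$ are joined by a black edge if every pair $\{u,w\}$ with $u\in U,w\in W$ is a black edge of $G$, are non-adjacent if no such pair is an edge, and are joined by a red edge otherwise. A contraction sequence of an $n$-vertex trigraph $G$ is a sequence $\mathcal{P}_n,\dots,\mathcal{P}_1$ of partitions of $V(G)$ where $\mathcal{P}_n$ is the partition into singletons and each $\mathcal{P}_i$ arises from $\mathcal{P}_{i+1}$ by merging two parts; its width is the maximum red degree over all $G/\mathcal{P}_i$, and $\operatorname{tww}(G)$ is the minimum width of a contraction sequence. *)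

theory Defs
  imports Main "HOL-Library.Extended_Nat"
begin

definition simple_graph :: "'a set \<Rightarrow> ('a \<Rightarrow> 'a \<Rightarrow> bool) \<Rightarrow> bool" where
  "simple_graph V E \<longleftrightarrow> finite V \<and> (\<forall>u v. E u v \<longrightarrow> E v u) \<and> (\<forall>v. \<not> E v v)
     \<and> (\<forall>u v. E u v \<longrightarrow> u \<in> V \<and> v \<in> V)"

definition subcubic :: "'a set \<Rightarrow> ('a \<Rightarrow> 'a \<Rightarrow> bool) \<Rightarrow> bool" where
  "subcubic V E \<longleftrightarrow> (\<forall>v\<in>V. card {u\<in>V. E v u} \<le> 3)"

text \<open>Cycles and girth (infinite for acyclic graphs).\<close>
definition has_cycle :: "'a set \<Rightarrow> ('a \<Rightarrow> 'a \<Rightarrow> bool) \<Rightarrow> nat \<Rightarrow> bool" where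
  "has_cycle V E l \<longleftrightarrow> l \<ge> 3 \<and> (\<exists>f :: nat \<Rightarrow> 'a. inj_on f {..<l} \<and> f ` {..<l} \<subseteq> V
      \<and> (\<forall>i<l. E (f i) (f ((i + 1) mod l))))"

definition girth :: "'a set \<Rightarrow> ('a \<Rightarrow> 'a \<Rightarrow> bool) \<Rightarrow> enat" where
  "girth V E = Inf {enat l | l. has_cycle V E l}"

text \<open>Trigraphs are given by a vertex set V, black edges B and red edges R.\<close>
definition red_adj :: "('a \<Rightarrow> 'a \<Rightarrow> bool) \<Rightarrow> ('a \<Rightarrow> 'a \<Rightarrow> bool) \<Rightarrow> 'a set \<Rightarrow> 'a set \<Rightarrow> bool" where
  "red_adj B R U W \<longleftrightarrow> \<not> (\<forall>u\<in>U. \<forall>w\<in>W. B u w) \<and> (\<exists>u\<in>U. \<exists>w\<in>W. B u w \<or> R u w)"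

definition red_deg :: "('a \<Rightarrow> 'a \<Rightarrow> bool) \<Rightarrow> ('a \<Rightarrow> 'a \<Rightarrow> bool) \<Rightarrow> 'a set set \<Rightarrow> 'a set \<Rightarrow> nat" where
  "red_deg B R P U = card {W \<in> P. W \<noteq> U \<and> red_adj B R U W}"

text \<open>A contraction sequence P_n, ..., P_1 (n = card V), encoded as a function on indices.\<close>
definition contraction_seq :: "'a set \<Rightarrow> (nat \<Rightarrow> 'a set set) \<Rightarrow> bool" where
  "contraction_seq V P \<longleftrightarrow>
     P (card V) = (\<lambda>v. {v}) ` V \<and>
     (\<forall>i. 1 \<le> i \<and> i < card V \<longrightarrow>
        (\<exists>X\<in>P (Suc i). \<exists>Y\<in>P (Suc i). X \<noteq> Y \<and> P i = insert (X \<union> Y) (P (Suc i) - {X, Y})))"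

definition seq_width_le :: "'a set \<Rightarrow> ('a \<Rightarrow> 'a \<Rightarrow> bool) \<Rightarrow> ('a \<Rightarrow> 'a \<Rightarrow> bool) \<Rightarrow> (nat \<Rightarrow> 'a set set) \<Rightarrow> nat \<Rightarrow> bool" where
  "seq_width_le V B R P d \<longleftrightarrow> (\<forall>i\<in>{1..card V}. \<forall>U\<in>P i. red_deg B R (P i) U \<le> d)"

definition tww_trigraph :: "'a set \<Rightarrow> ('a \<Rightarrow> 'a \<Rightarrow> bool) \<Rightarrow> ('a \<Rightarrow> 'a \<Rightarrow> bool) \<Rightarrow> nat" where
  "tww_trigraph V B R = (LEAST d. \<exists>P. contraction_seq V P \<and> seq_width_le V B R P d)"

definition tww :: "'a set \<Rightarrow> ('a \<Rightarrow> 'a \<Rightarrow> bool) \<Rightarrow> nat" where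
  "tww V E = tww_trigraph V E (\<lambda>_ _. False)"

end

theory Submission
  imports Defs "HOL-Library.Disjoint_Sets"
begin

(* Suppose a minimal graph G contains a triangle uvw or a 4-cycle uwvz. Identify u with v (and,
   for the 4-cycle, also w with z). Because the identified vertices share neighbours, the quotient
   is again a simple subcubic graph, and it is smaller, so its twin-width is at most k - 1. Contract
   G first to this quotient, which only creates parts of at most three vertices and hence red degree
   at most 9, and then follow an optimal contraction sequence of the quotient. A lifted part gains
   red edges only towards parts that are black neighbours in the quotient; such a part lies in the
   neighbourhood of one vertex, so it has at most three vertices and again red degree at most 9.
   Thus tww G <= max (k - 1) 9 < k, a contradiction. *)

section \<open>Partitions and contraction sequences\<close>

definition merge_step :: "'a set set \<Rightarrow> 'a set set \<Rightarrow> bool" where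
  "merge_step P P' \<longleftrightarrow> (\<exists>X\<in>P. \<exists>Y\<in>P. X \<noteq> Y \<and> P' = insert (X \<union> Y) (P - {X, Y}))"

lemma contraction_seq_iff:
  "contraction_seq V P \<longleftrightarrow> P (card V) = (\<lambda>v. {v}) ` V
     \<and> (\<forall>i. 1 \<le> i \<and> i < card V \<longrightarrow> merge_step (P (Suc i)) (P i))"
  unfolding contraction_seq_def merge_step_def ..

lemma partition_on_subset_Pow: "partition_on A P \<Longrightarrow> P \<subseteq> Pow A"
  using partition_onD1[of A P] by blast

lemma partition_on_merge_step:
  assumes "partition_on V P" "merge_step P P'"
  shows "partition_on V P'"
proof -
  obtain X Y where XY: "X \<in> P" "Y \<in> P" "X \<noteq> Y" and P': "P' = insert (X \<union> Y) (P - {X, Y})"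
    using assms(2) unfolding merge_step_def by blast
  have "\<Union>P' = \<Union>P"
    using XY unfolding P' by blast
  moreover have "disjoint P'"
    using partition_onD2[OF assms(1)] XY unfolding P' disjoint_def by auto
  moreover have "{} \<notin> P'"
    using partition_onD3[OF assms(1)] XY unfolding P' by auto
  ultimately show ?thesis
    using partition_onD1[OF assms(1)] unfolding partition_on_def by simp
qed

lemma merge_step_image:
  assumes "merge_step P P'" "inj_on H P" "\<And>X Y. H (X \<union> Y) = H X \<union> H Y"
  shows "merge_step (H ` P) (H ` P')"
proof -
  obtain X Y where XY: "X \<in> P" "Y \<in> P" "X \<noteq> Y" and P': "P' = insert (X \<union> Y) (P - {X, Y})"
    using assms(1) unfolding merge_step_def by blast
  have "H ` (P - {X, Y}) = H ` P - {H X, H Y}"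
    using inj_on_image_set_diff[OF assms(2)] XY by auto
  then have "H ` P' = insert (H X \<union> H Y) (H ` P - {H X, H Y})"
    unfolding P' by (simp add: assms(3))
  moreover have "H X \<noteq> H Y"
    using inj_onD[OF assms(2)] XY by blast
  ultimately show ?thesis
    unfolding merge_step_def using XY by blast
qed

lemma contraction_seq_partition_on:
  assumes P: "contraction_seq V P" and i: "1 \<le> i" "i \<le> card V"
  shows "partition_on V (P i)"
  using i(2)
proof (induction rule: inc_induct)
  case base
  then show ?case
    using P by (simp add: contraction_seq_def partition_on_singletons)
next
  case (step n)
  then have "merge_step (P (Suc n)) (P n)"
    using P i(1) by (simp add: contraction_seq_iff)
  then show ?case
    using step.IH partition_on_merge_step by blast
qed

lemma card_parts_meeting_le:
  assumes "disjoint P" "finite S"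
  shows "card {W \<in> P. W \<inter> S \<noteq> {}} \<le> card S"
proof (rule card_inj_on_le)
  let ?pick = "\<lambda>W. SOME s. s \<in> W \<inter> S"
  have pick: "?pick W \<in> W \<inter> S" if "W \<inter> S \<noteq> {}" for W
    by (rule someI_ex) (use that in blast)
  show "inj_on ?pick {W \<in> P. W \<inter> S \<noteq> {}}"
  proof (rule inj_onI)
    fix W1 W2
    assume W: "W1 \<in> {W \<in> P. W \<inter> S \<noteq> {}}" "W2 \<in> {W \<in> P. W \<inter> S \<noteq> {}}" "?pick W1 = ?pick W2"
    then have "?pick W1 \<in> W1 \<inter> W2"
      using pick[of W1] pick[of W2] by auto
    then show "W1 = W2"
      using W disjointD[OF assms(1)] by blast
  qed
  show "?pick ` {W \<in> P. W \<inter> S \<noteq> {}} \<subseteq> S"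
    using pick by auto
qed fact

lemma card_partition_on_le:
  assumes "finite V" "partition_on V P"
  shows "card P \<le> card V"
proof -
  have "{W \<in> P. W \<inter> V \<noteq> {}} = P"
  proof (intro subset_antisym subsetI CollectI conjI)
    fix W assume "W \<in> P"
    then show "W \<inter> V \<noteq> {}"
      using partition_onD1[OF assms(2)] partition_onD3[OF assms(2)] by (metis Sup_upper inf.absorb_iff1)
  qed auto
  then show ?thesis
    using card_parts_meeting_le[OF partition_onD2[OF assms(2)] assms(1)] by simp
qed

lemma partition_on_all_singletons:
  assumes P: "partition_on V P" and singletons: "\<forall>X\<in>P. \<exists>x. X = {x}"
  shows "P = (\<lambda>v. {v}) ` V"
proof
  show "P \<subseteq> (\<lambda>v. {v}) ` V"
    using singletons partition_onD1[OF P] by fastforce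
  show "(\<lambda>v. {v}) ` V \<subseteq> P"
  proof
    fix Y assume "Y \<in> (\<lambda>v. {v}) ` V"
    then obtain v X where "Y = {v}" "v \<in> X" "X \<in> P"
      using partition_onD1[OF P] by blast
    then show "Y \<in> P"
      using singletons by force
  qed
qed

lemma partition_on_split_off:
  assumes P: "partition_on V P" and X: "X \<in> P" "x \<in> X" "X \<noteq> {x}"
  shows "partition_on V (insert {x} (insert (X - {x}) (P - {X})))"
proof -
  have disj: "disjnt W X" if "W \<in> P - {X}" for W
    using partition_onD2[OF P] X(1) that unfolding pairwise_def by blast
  have "disjoint (P - {X})"
    using pairwise_subset[OF partition_onD2[OF P]] by blast
  moreover have "disjnt {x} W" "disjnt (X - {x}) W" if "W \<in> P - {X}" for W
    using disj[OF that] X(2) unfolding disjnt_def by blast+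
  ultimately have "disjoint (insert {x} (insert (X - {x}) (P - {X})))"
    by (auto simp: pairwise_insert disjnt_def)
  moreover have "\<Union>(insert {x} (insert (X - {x}) (P - {X}))) = \<Union>P"
    using X(1,2) by blast
  moreover have "{} \<notin> insert {x} (insert (X - {x}) (P - {X}))"
    using partition_onD3[OF P] X by blast
  ultimately show ?thesis
    using partition_onD1[OF P] unfolding partition_on_def by simp
qed

lemma partition_on_unmerge:
  assumes P: "partition_on V P" "finite P" and X: "X \<in> P" "x \<in> X" "X \<noteq> {x}"
  obtains P' where "partition_on V P'" "merge_step P' P" "refines V P' P" "card P' = Suc (card P)"
proof
  let ?P' = "insert {x} (insert (X - {x}) (P - {X}))"
  show P': "partition_on V ?P'"
    using partition_on_split_off[OF P(1) X] .
  have "W \<inter> X = {}" if "W \<in> P - {X}" for W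
    using disjointD[OF partition_onD2[OF P(1)]] X(1) that by blast
  then have new: "{x} \<notin> P - {X}" "X - {x} \<notin> P - {X}" "{x} \<noteq> X - {x}"
    using X by blast+
  then have "?P' - {{x}, X - {x}} = P - {X}"
    by auto
  moreover have "{x} \<union> (X - {x}) = X"
    using X(2) by blast
  ultimately have "P = insert ({x} \<union> (X - {x})) (?P' - {{x}, X - {x}})"
    using X(1) by (simp add: insert_absorb)
  moreover have "{x} \<in> ?P'" "X - {x} \<in> ?P'"
    by simp_all
  ultimately show "merge_step ?P' P"
    unfolding merge_step_def using new(3) by (intro bexI conjI)
  have "\<exists>Y\<in>P. Z \<subseteq> Y" if "Z \<in> ?P'" for Z
    using that X(1,2) by auto
  then show "refines V ?P' P"
    using P(1) P' unfolding refines_def by blast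
  have "card ?P' = Suc (Suc (card (P - {X})))"
    using P(2) new by (simp add: card.insert_remove)
  also have "Suc (card (P - {X})) = card P"
    using P(2) X(1) by (rule card_Suc_Diff1)
  finally show "card ?P' = Suc (card P)" .
qed

lemma merge_steps_to_partition:
  assumes V: "finite V" and Q: "partition_on V \<Q>"
  shows "\<exists>Q. Q (card V) = (\<lambda>v. {v}) ` V \<and> Q (card \<Q>) = \<Q>
    \<and> (\<forall>i. card \<Q> \<le> i \<and> i < card V \<longrightarrow> merge_step (Q (Suc i)) (Q i))
    \<and> (\<forall>i. card \<Q> \<le> i \<and> i \<le> card V \<longrightarrow> refines V (Q i) \<Q>)"
  using Q
proof (induction "card V - card \<Q>" arbitrary: \<Q> rule: less_induct)
  case less
  show ?case
  proof (cases "\<forall>X\<in>\<Q>. \<exists>x. X = {x}")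
    case True
    then have "\<Q> = (\<lambda>v. {v}) ` V"
      using partition_on_all_singletons[OF less.prems] by simp
    moreover have "card ((\<lambda>v. {v}) ` V) = card V"
      by (simp add: card_image)
    ultimately show ?thesis
      using refines_refl[OF less.prems] by (intro exI[of _ "\<lambda>_. \<Q>"]) auto
  next
    case False
    then obtain X x where "X \<in> \<Q>" "x \<in> X" "X \<noteq> {x}"
      using partition_onD3[OF less.prems] by (metis ex_in_conv)
    then obtain \<Q>' where \<Q>': "partition_on V \<Q>'" "merge_step \<Q>' \<Q>" "refines V \<Q>' \<Q>"
      "card \<Q>' = Suc (card \<Q>)"
      using partition_on_unmerge[OF less.prems finite_elements[OF V less.prems]] by blast
    moreover have "card \<Q>' \<le> card V"
      using card_partition_on_le[OF V \<Q>'(1)] .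
    ultimately obtain Q' where Q':
      "Q' (card V) = (\<lambda>v. {v}) ` V" "Q' (Suc (card \<Q>)) = \<Q>'"
      "\<forall>i. Suc (card \<Q>) \<le> i \<and> i < card V \<longrightarrow> merge_step (Q' (Suc i)) (Q' i)"
      "\<forall>i. Suc (card \<Q>) \<le> i \<and> i \<le> card V \<longrightarrow> refines V (Q' i) \<Q>'"
      using less.hyps[of \<Q>'] by (metis diff_less_mono2 lessI less_le_trans)
    define Q where "Q = Q'(card \<Q> := \<Q>)"
    have "Q (card V) = (\<lambda>v. {v}) ` V" "Q (card \<Q>) = \<Q>"
      using Q'(1) \<open>card \<Q>' \<le> card V\<close> \<Q>'(4) unfolding Q_def by simp_all
    moreover have "merge_step (Q (Suc i)) (Q i)" if "card \<Q> \<le> i" "i < card V" for i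
      using Q'(2,3) \<Q>'(2) that unfolding Q_def by (cases "i = card \<Q>") simp_all
    moreover have "refines V (Q i) \<Q>" if "card \<Q> \<le> i" "i \<le> card V" for i
      using Q'(4) refines_refl[OF less.prems] refines_trans[OF _ \<Q>'(3)] that
      unfolding Q_def by (cases "i = card \<Q>") simp_all
    ultimately show ?thesis
      by blast
  qed
qed

lemma contraction_seq_exists: "\<exists>P. contraction_seq V P"
proof (cases "finite V \<and> V \<noteq> {}")
  case True
  then obtain Q where "Q (card V) = (\<lambda>v. {v}) ` V"
    "\<forall>i. 1 \<le> i \<and> i < card V \<longrightarrow> merge_step (Q (Suc i)) (Q i)"
    using merge_steps_to_partition[OF _ partition_on_space, of V] by auto
  then show ?thesis
    unfolding contraction_seq_iff by blast
next
  case False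
  then have "card V = 0"
    by auto
  then show ?thesis
    unfolding contraction_seq_def by auto \<comment> \<open>only the condition on \<open>P 0\<close> remains\<close>
qed

lemma seq_width_le_card:
  assumes "contraction_seq V P"
  shows "seq_width_le V B R P (card V)"
  unfolding seq_width_le_def
proof (intro ballI)
  fix i U assume i: "i \<in> {1..card V}" and "U \<in> P i"
  then have V: "finite V"
    by (simp add: card_ge_0_finite)
  have P: "partition_on V (P i)"
    using contraction_seq_partition_on[OF assms] i by simp
  have "red_deg B R (P i) U \<le> card (P i)"
    unfolding red_deg_def using finite_elements[OF V P] by (intro card_mono) auto
  also have "\<dots> \<le> card V"
    using card_partition_on_le[OF V P] .
  finally show "red_deg B R (P i) U \<le> card V" .
qed

lemma tww_trigraph_attained:
  "\<exists>P. contraction_seq V P \<and> seq_width_le V B R P (tww_trigraph V B R)"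
proof -
  obtain P where "contraction_seq V P"
    using contraction_seq_exists by blast
  then have "\<exists>d P. contraction_seq V P \<and> seq_width_le V B R P d"
    using seq_width_le_card by blast
  then show ?thesis
    unfolding tww_trigraph_def by (rule LeastI_ex)
qed

lemma tww_trigraph_le:
  assumes "contraction_seq V P" "seq_width_le V B R P d"
  shows "tww_trigraph V B R \<le> d"
  unfolding tww_trigraph_def by (rule Least_le) (use assms in blast)

section \<open>Red degrees in subcubic graphs\<close>

definition nbrs :: "'a set \<Rightarrow> ('a \<Rightarrow> 'a \<Rightarrow> bool) \<Rightarrow> 'a set \<Rightarrow> 'a set" where
  "nbrs V E U = {y \<in> V. \<exists>u\<in>U. E u y}"

lemma nbrs_singleton: "nbrs V E {u} = {y \<in> V. E u y}"
  unfolding nbrs_def by simp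

lemma card_nbrs_le:
  assumes "simple_graph V E" "subcubic V E" "U \<subseteq> V"
  shows "card (nbrs V E U) \<le> 3 * card U"
proof -
  have V: "finite V"
    using assms(1) unfolding simple_graph_def by simp
  have "nbrs V E U = (\<Union>u\<in>U. nbrs V E {u})"
    unfolding nbrs_def by auto
  also have "card \<dots> \<le> (\<Sum>u\<in>U. card (nbrs V E {u}))"
    by (rule card_UN_le) (use finite_subset[OF assms(3) V] in simp)
  also have "\<dots> \<le> (\<Sum>u\<in>U. 3)"
    using assms(2,3) unfolding subcubic_def nbrs_singleton by (intro sum_mono) auto
  finally show ?thesis
    by simp
qed

lemma card_adjacent_parts_le:
  assumes G: "simple_graph V E" "subcubic V E" and P: "partition_on V P" and U: "U \<subseteq> V"
  shows "card {W \<in> P. \<exists>u\<in>U. \<exists>w\<in>W. E u w} \<le> 3 * card U"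
proof -
  have V: "finite V"
    using G(1) unfolding simple_graph_def by simp
  have "{W \<in> P. \<exists>u\<in>U. \<exists>w\<in>W. E u w} \<subseteq> {W \<in> P. W \<inter> nbrs V E U \<noteq> {}}"
    using G(1) unfolding simple_graph_def nbrs_def by blast
  then have "card {W \<in> P. \<exists>u\<in>U. \<exists>w\<in>W. E u w} \<le> card {W \<in> P. W \<inter> nbrs V E U \<noteq> {}}"
    using finite_elements[OF V P] by (intro card_mono) auto
  also have "\<dots> \<le> card (nbrs V E U)"
    using V by (intro card_parts_meeting_le[OF partition_onD2[OF P]]) (simp add: nbrs_def)
  also have "\<dots> \<le> 3 * card U"
    using card_nbrs_le[OF G U] .
  finally show ?thesis .
qed

lemma red_deg_graph_le:
  assumes "simple_graph V E" "subcubic V E" "partition_on V P" "U \<subseteq> V"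
  shows "red_deg E (\<lambda>_ _. False) P U \<le> 3 * card U"
proof -
  have "finite P"
    using assms(1,3) finite_elements unfolding simple_graph_def by blast
  then have "red_deg E (\<lambda>_ _. False) P U \<le> card {W \<in> P. \<exists>u\<in>U. \<exists>w\<in>W. E u w}"
    unfolding red_deg_def red_adj_def by (intro card_mono) auto
  also have "\<dots> \<le> 3 * card U"
    using card_adjacent_parts_le[OF assms] .
  finally show ?thesis .
qed

lemma card_common_nbrs_le:
  assumes "simple_graph V E" "subcubic V E" "w \<in> V" "X \<subseteq> V" "\<forall>x\<in>X. E x w"
  shows "card X \<le> 3"
proof -
  have "X \<subseteq> nbrs V E {w}"
    using assms(1,4,5) unfolding simple_graph_def nbrs_def by blast
  moreover have "finite (nbrs V E {w})"
    using assms(1) unfolding simple_graph_def nbrs_def by simp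
  ultimately have "card X \<le> card (nbrs V E {w})"
    by (rule card_mono[rotated])
  also have "\<dots> \<le> 3"
    using card_nbrs_le[OF assms(1,2), of "{w}"] assms(3) by simp
  finally show ?thesis .
qed

section \<open>Quotient graphs\<close>

definition quot_edge :: "('a \<Rightarrow> 'b) \<Rightarrow> 'a set \<Rightarrow> ('a \<Rightarrow> 'a \<Rightarrow> bool) \<Rightarrow> 'b \<Rightarrow> 'b \<Rightarrow> bool" where
  "quot_edge \<phi> V E i j \<longleftrightarrow> i \<noteq> j \<and> (\<exists>a\<in>V. \<exists>b\<in>V. E a b \<and> \<phi> a = i \<and> \<phi> b = j)"

definition lift :: "('a \<Rightarrow> 'b) \<Rightarrow> 'a set \<Rightarrow> 'b set \<Rightarrow> 'a set" where
  "lift \<phi> V X = {a \<in> V. \<phi> a \<in> X}"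

lemma simple_graph_quot_edge:
  "simple_graph V E \<Longrightarrow> simple_graph (\<phi> ` V) (quot_edge \<phi> V E)"
  unfolding simple_graph_def quot_edge_def by blast

lemma lift_Un: "lift \<phi> V (X \<union> Y) = lift \<phi> V X \<union> lift \<phi> V Y"
  unfolding lift_def by auto

lemma image_lift: "X \<subseteq> \<phi> ` V \<Longrightarrow> \<phi> ` lift \<phi> V X = X"
  unfolding lift_def by auto

lemma inj_on_lift: "inj_on (lift \<phi> V) (Pow (\<phi> ` V))"
  by (rule inj_onI) (metis PowD image_lift)

lemma partition_on_lift:
  assumes "partition_on (\<phi> ` V) P"
  shows "partition_on V (lift \<phi> V ` P)"
proof -
  have "\<Union>(lift \<phi> V ` P) = V"
    using partition_onD1[OF assms] unfolding lift_def by auto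
  moreover have "disjoint (lift \<phi> V ` P)"
  proof (rule disjointI)
    fix A B assume "A \<in> lift \<phi> V ` P" "B \<in> lift \<phi> V ` P" "A \<noteq> B"
    then obtain X Y where "X \<in> P" "Y \<in> P" "X \<noteq> Y" "A = lift \<phi> V X" "B = lift \<phi> V Y"
      by blast
    then show "A \<inter> B = {}"
      using disjointD[OF partition_onD2[OF assms]] unfolding lift_def by auto
  qed
  moreover have "lift \<phi> V X \<noteq> {}" if X: "X \<in> P" for X
  proof -
    obtain x where "x \<in> X"
      using partition_onD3[OF assms] X by (metis ex_in_conv)
    moreover have "X \<subseteq> \<phi> ` V"
      using partition_onD1[OF assms] X by auto
    ultimately obtain a where "a \<in> V" "\<phi> a \<in> X"
      by auto
    then show ?thesis
      unfolding lift_def by auto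
  qed
  ultimately show ?thesis
    unfolding partition_on_def by auto
qed

lemma red_deg_image:
  assumes "inj_on H P" "X \<in> P"
  shows "red_deg B R (H ` P) (H X) = card {W \<in> P. W \<noteq> X \<and> red_adj B R (H X) (H W)}"
proof -
  have "{U \<in> H ` P. U \<noteq> H X \<and> red_adj B R (H X) U} = H ` {W \<in> P. W \<noteq> X \<and> red_adj B R (H X) (H W)}"
    using inj_onD[OF assms(1) _ assms(2)] assms(2) by auto
  then show ?thesis
    unfolding red_deg_def using assms(1) by (simp add: card_image inj_on_subset)
qed

lemma quot_edge_of_red_adj_lift:
  assumes "red_adj E (\<lambda>_ _. False) (lift \<phi> V X) (lift \<phi> V W)" "X \<inter> W = {}"
  shows "\<exists>x\<in>X. \<exists>w\<in>W. quot_edge \<phi> V E x w"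
proof -
  obtain a b where ab: "a \<in> lift \<phi> V X" "b \<in> lift \<phi> V W" "E a b"
    using assms(1) unfolding red_adj_def by auto
  then have "quot_edge \<phi> V E (\<phi> a) (\<phi> b)"
    using assms(2) unfolding quot_edge_def lift_def by auto
  then show ?thesis
    using ab unfolding lift_def by auto
qed

text \<open>A red edge of the lifted partition comes from a red or a black edge of the quotient; a part
  with a black neighbour lies in the neighbourhood of a single vertex, so it has at most three
  vertices and hence at most nine neighbouring parts.\<close>

lemma red_deg_lift_le:
  assumes G: "simple_graph V E" and sc': "subcubic (\<phi> ` V) (quot_edge \<phi> V E)"
    and P: "partition_on (\<phi> ` V) P" and X: "X \<in> P"
  shows "red_deg E (\<lambda>_ _. False) (lift \<phi> V ` P) (lift \<phi> V X)
    \<le> max (red_deg (quot_edge \<phi> V E) (\<lambda>_ _. False) P X) 9"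
proof -
  let ?F = "\<lambda>_ _. False :: bool" and ?E' = "quot_edge \<phi> V E" and ?L = "lift \<phi> V"
  have G': "simple_graph (\<phi> ` V) ?E'"
    using simple_graph_quot_edge[OF G] .
  have finP: "finite P"
    using G P finite_elements unfolding simple_graph_def by auto
  have PV: "W \<subseteq> \<phi> ` V" if "W \<in> P" for W
    using partition_on_subset_Pow[OF P] that by auto
  define S where "S = {W \<in> P. W \<noteq> X \<and> red_adj E ?F (?L X) (?L W)}"
  have "red_deg E ?F (?L ` P) (?L X) = card S"
    unfolding S_def using PV X by (intro red_deg_image inj_on_subset[OF inj_on_lift]) auto
  moreover have quot_edge_S: "\<exists>x\<in>X. \<exists>w\<in>W. ?E' x w" if W: "W \<in> S" for W
    using W X disjointD[OF partition_onD2[OF P]] unfolding S_def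
    by (intro quot_edge_of_red_adj_lift) auto
  moreover have "card S \<le> max (red_deg ?E' ?F P X) 9"
  proof (cases "\<exists>W\<in>S. \<forall>x\<in>X. \<forall>w\<in>W. ?E' x w")
    case True
    then obtain W w where W: "W \<in> S" "w \<in> W" "\<forall>x\<in>X. ?E' x w"
      using partition_onD3[OF P] unfolding S_def by (metis (no_types, lifting) ex_in_conv mem_Collect_eq)
    then have "card X \<le> 3"
      using PV X unfolding S_def by (intro card_common_nbrs_le[OF G' sc']) auto
    have "S \<subseteq> {W \<in> P. \<exists>x\<in>X. \<exists>w\<in>W. ?E' x w}"
      using quot_edge_S unfolding S_def by auto
    then have "card S \<le> card {W \<in> P. \<exists>x\<in>X. \<exists>w\<in>W. ?E' x w}"
      using finP by (intro card_mono) auto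
    also have "\<dots> \<le> 3 * card X"
      using card_adjacent_parts_le[OF G' sc' P PV[OF X]] .
    finally show ?thesis
      using \<open>card X \<le> 3\<close> by simp
  next
    case False
    have "red_adj ?E' ?F X W" if "W \<in> S" for W
      using False quot_edge_S[OF that] that unfolding red_adj_def by blast
    then have "S \<subseteq> {W \<in> P. W \<noteq> X \<and> red_adj ?E' ?F X W}"
      unfolding S_def by blast
    then have "card S \<le> red_deg ?E' ?F P X"
      unfolding red_deg_def using finP by (intro card_mono) auto
    then show ?thesis
      by simp
  qed
  ultimately show ?thesis
    by linarith
qed

lemma card_lift_singletons: "card (lift \<phi> V ` (\<lambda>j. {j}) ` \<phi> ` V) = card (\<phi> ` V)"
  by (subst card_image[OF inj_on_subset[OF inj_on_lift]]) (auto simp: card_image)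

lemma contraction_seq_lift_append:
  assumes P': "contraction_seq (\<phi> ` V) P'" and V: "finite V"
    and Q: "Q (card V) = (\<lambda>v. {v}) ` V" "Q (card (\<phi> ` V)) = lift \<phi> V ` (\<lambda>j. {j}) ` \<phi> ` V"
      "\<forall>i. card (\<phi> ` V) \<le> i \<and> i < card V \<longrightarrow> merge_step (Q (Suc i)) (Q i)"
  shows "contraction_seq V (\<lambda>i. if i \<le> card (\<phi> ` V) then lift \<phi> V ` P' i else Q i)"
    (is "contraction_seq V ?P")
  unfolding contraction_seq_iff
proof (intro conjI allI impI)
  let ?m = "card (\<phi> ` V)"
  have P_m: "?P ?m = Q ?m"
    using P' Q(2) unfolding contraction_seq_def by simp
  have "?m \<le> card V"
    using V by (rule card_image_le)
  then have "?P (card V) = Q (card V)"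
    using P_m by (cases "card V = ?m") auto
  then show "?P (card V) = (\<lambda>v. {v}) ` V"
    using Q(1) by simp
next
  fix i assume i: "1 \<le> i \<and> i < card V"
  show "merge_step (?P (Suc i)) (?P i)"
  proof (cases "i < card (\<phi> ` V)")
    case True
    have step: "merge_step (P' (Suc i)) (P' i)"
      using P' i True unfolding contraction_seq_iff by simp
    have "partition_on (\<phi> ` V) (P' (Suc i))"
      using contraction_seq_partition_on[OF P', of "Suc i"] True by simp
    then have inj: "inj_on (lift \<phi> V) (P' (Suc i))"
      by (intro inj_on_subset[OF inj_on_lift] partition_on_subset_Pow)
    show ?thesis
      using merge_step_image[OF step inj lift_Un] True by simp
  next
    case False
    then show ?thesis
      using P' Q(2,3) i unfolding contraction_seq_def by (auto simp: not_less le_Suc_eq)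
  qed
qed

lemma red_deg_refining_fibres_le:
  assumes G: "simple_graph V E" "subcubic V E"
    and fibres: "\<forall>a\<in>V. card (lift \<phi> V {\<phi> a}) \<le> 3"
    and Q: "refines V Q (lift \<phi> V ` (\<lambda>j. {j}) ` \<phi> ` V)" and U: "U \<in> Q"
  shows "red_deg E (\<lambda>_ _. False) Q U \<le> 9"
proof -
  have Q': "partition_on V Q"
    using Q unfolding refines_def by simp
  obtain a where a: "a \<in> V" "U \<subseteq> lift \<phi> V {\<phi> a}"
    using Q U unfolding refines_def by auto
  have "card U \<le> card (lift \<phi> V {\<phi> a})"
    using G(1) a(2) unfolding simple_graph_def by (intro card_mono) (auto simp: lift_def)
  also have "\<dots> \<le> 3"
    using fibres a(1) by simp
  finally have "3 * card U \<le> 9"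
    by simp
  moreover have "red_deg E (\<lambda>_ _. False) Q U \<le> 3 * card U"
    using red_deg_graph_le[OF G Q'] partition_on_subset_Pow[OF Q'] U by auto
  ultimately show ?thesis
    by linarith
qed

lemma tww_le_max_quotient:
  assumes G: "simple_graph V E" "subcubic V E"
    and sc': "subcubic (\<phi> ` V) (quot_edge \<phi> V E)"
    and fibres: "\<forall>a\<in>V. card (lift \<phi> V {\<phi> a}) \<le> 3"
  shows "tww V E \<le> max (tww (\<phi> ` V) (quot_edge \<phi> V E)) 9"
proof -
  let ?F = "\<lambda>_ _. False :: bool" and ?E' = "quot_edge \<phi> V E" and ?L = "lift \<phi> V"
  let ?d = "max (tww (\<phi> ` V) ?E') 9" and ?fibres = "lift \<phi> V ` (\<lambda>j. {j}) ` \<phi> ` V"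
    and ?m = "card (\<phi> ` V)"
  have V: "finite V"
    using G(1) unfolding simple_graph_def by simp
  obtain Q where Q: "Q (card V) = (\<lambda>v. {v}) ` V" "Q ?m = ?fibres"
    "\<forall>i. ?m \<le> i \<and> i < card V \<longrightarrow> merge_step (Q (Suc i)) (Q i)"
    "\<forall>i. ?m \<le> i \<and> i \<le> card V \<longrightarrow> refines V (Q i) ?fibres"
    using merge_steps_to_partition[OF V partition_on_lift[OF partition_on_singletons[of "\<phi> ` V"]]]
    unfolding card_lift_singletons by auto
  obtain P' where P': "contraction_seq (\<phi> ` V) P'" "seq_width_le (\<phi> ` V) ?E' ?F P' (tww (\<phi> ` V) ?E')"
    unfolding tww_def using tww_trigraph_attained by blast
  define P where "P i = (if i \<le> ?m then ?L ` P' i else Q i)" for i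
  have "contraction_seq V P"
    unfolding P_def using contraction_seq_lift_append[OF P'(1) V Q(1-3)] .
  moreover have "seq_width_le V E ?F P ?d"
    unfolding seq_width_le_def
  proof (intro ballI)
    fix i U assume i: "i \<in> {1..card V}" and U: "U \<in> P i"
    show "red_deg E ?F (P i) U \<le> ?d"
    proof (cases "i \<le> ?m")
      case True
      then obtain X where X: "X \<in> P' i" "U = ?L X"
        using U unfolding P_def by auto
      have "partition_on (\<phi> ` V) (P' i)"
        using contraction_seq_partition_on[OF P'(1)] i True by simp
      then have "red_deg E ?F (P i) U \<le> max (red_deg ?E' ?F (P' i) X) 9"
        using red_deg_lift_le[OF G(1) sc' _ X(1)] True X(2) unfolding P_def by simp
      moreover have "red_deg ?E' ?F (P' i) X \<le> tww (\<phi> ` V) ?E'"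
        using P'(2) X(1) i True unfolding seq_width_le_def by auto
      ultimately show ?thesis
        by linarith
    next
      case False
      then have "U \<in> Q i" "refines V (Q i) ?fibres"
        using U Q(4) i unfolding P_def by auto
      then have "red_deg E ?F (Q i) U \<le> 9"
        by (intro red_deg_refining_fibres_le[OF G fibres])
      then show ?thesis
        using False unfolding P_def by simp
    qed
  qed
  ultimately show ?thesis
    unfolding tww_def by (rule tww_trigraph_le)
qed

lemma subcubic_quot_edge:
  assumes "simple_graph V E"
    and "\<forall>a\<in>V. card (\<phi> ` (nbrs V E (lift \<phi> V {\<phi> a}) - lift \<phi> V {\<phi> a})) \<le> 3"
  shows "subcubic (\<phi> ` V) (quot_edge \<phi> V E)"
  unfolding subcubic_def
proof
  fix i assume "i \<in> \<phi> ` V"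
  then obtain a where a: "a \<in> V" "i = \<phi> a"
    by blast
  let ?N = "nbrs V E (lift \<phi> V {\<phi> a}) - lift \<phi> V {\<phi> a}"
  have "{j \<in> \<phi> ` V. quot_edge \<phi> V E i j} \<subseteq> \<phi> ` ?N"
  proof
    fix j assume "j \<in> {j \<in> \<phi> ` V. quot_edge \<phi> V E i j}"
    then obtain b c where "b \<in> V" "c \<in> V" "E b c" "\<phi> b = \<phi> a" "\<phi> c = j" "j \<noteq> \<phi> a"
      unfolding quot_edge_def a(2) by auto
    then have "c \<in> ?N"
      unfolding nbrs_def lift_def by auto
    then show "j \<in> \<phi> ` ?N"
      using \<open>\<phi> c = j\<close> by blast
  qed
  moreover have "finite (\<phi> ` ?N)"
    using assms(1) unfolding simple_graph_def nbrs_def by simp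
  ultimately have "card {j \<in> \<phi> ` V. quot_edge \<phi> V E i j} \<le> card (\<phi> ` ?N)"
    by (rule card_mono[rotated])
  then show "card {j \<in> \<phi> ` V. quot_edge \<phi> V E i j} \<le> 3"
    using assms(2) a(1) by fastforce
qed

lemma card_nbrs_Diff_two_le:
  assumes G: "simple_graph V E" "subcubic V E" and "E x y" "E x z" "y \<noteq> z"
  shows "card (nbrs V E {x} - {y, z}) \<le> 1"
proof -
  have "{y, z} \<subseteq> nbrs V E {x}"
    using G(1) assms(3,4) unfolding simple_graph_def nbrs_def by auto
  moreover have "card (nbrs V E {x}) \<le> 3"
    using card_nbrs_le[OF G, of "{x}"] G(1) assms(3) unfolding simple_graph_def by auto
  ultimately show ?thesis
    using assms(5) by (simp add: card_Diff_subset finite_subset)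
qed

lemma card_image_nbrs_le:
  assumes G: "simple_graph V E" "subcubic V E" and "a \<in> V"
  shows "card (\<phi> ` (nbrs V E {a} - {a})) \<le> 3"
proof -
  have "finite (nbrs V E {a})"
    using G(1) unfolding simple_graph_def nbrs_def by simp
  then have "card (\<phi> ` (nbrs V E {a} - {a})) \<le> card (nbrs V E {a})"
    by (meson card_image_le card_mono finite_Diff Diff_subset le_trans)
  also have "\<dots> \<le> 3"
    using card_nbrs_le[OF G, of "{a}"] assms(3) by simp
  finally show ?thesis .
qed

lemma card_image_nbrs_pair_le:
  assumes G: "simple_graph V E" "subcubic V E"
    and p: "E p r" "E p t" "r \<noteq> t" and q: "E q r'" "E q t'" "r' \<noteq> t'"
    and shared: "card (\<phi> ` ({r, t, r', t'} - {p, q})) \<le> 1"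
  shows "card (\<phi> ` (nbrs V E {p, q} - {p, q})) \<le> 3"
proof -
  let ?A = "nbrs V E {p} - {r, t}" and ?B = "nbrs V E {q} - {r', t'}"
    and ?C = "{r, t, r', t'} - {p, q}"
  have fin: "finite ?A" "finite ?B"
    using G(1) unfolding simple_graph_def nbrs_def by simp_all
  have "nbrs V E {p, q} - {p, q} \<subseteq> ?C \<union> ?A \<union> ?B"
    unfolding nbrs_def by auto
  then have "card (\<phi> ` (nbrs V E {p, q} - {p, q})) \<le> card (\<phi> ` ?C \<union> \<phi> ` ?A \<union> \<phi> ` ?B)"
    using fin by (intro card_mono) auto
  also have "\<dots> \<le> card (\<phi> ` ?C) + card (\<phi> ` ?A) + card (\<phi> ` ?B)"
    by (meson card_Un_le add_le_mono le_refl order_trans)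
  also have "\<dots> \<le> 1 + card ?A + card ?B"
    using shared card_image_le[OF fin(1), of \<phi>] card_image_le[OF fin(2), of \<phi>] by linarith
  also have "\<dots> \<le> 3"
    using card_nbrs_Diff_two_le[OF G p] card_nbrs_Diff_two_le[OF G q] by linarith
  finally show ?thesis .
qed

section \<open>Minimal subcubic graphs of large twin-width\<close>

definition tww_minimal_subcubic :: "nat \<Rightarrow> 'a set \<Rightarrow> ('a \<Rightarrow> 'a \<Rightarrow> bool) \<Rightarrow> bool" where
  "tww_minimal_subcubic k V E \<longleftrightarrow> simple_graph V E \<and> subcubic V E \<and> tww V E \<ge> k
     \<and> (\<forall>(W :: nat set) F. simple_graph W F \<and> subcubic W F \<and> tww W F \<ge> k \<longrightarrow> card V \<le> card W)"

text \<open>Minimality only speaks about graphs on \<^typ>\<open>nat\<close>, hence the relabelling of the quotient.\<close>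

lemma nat_relabelling:
  fixes \<psi> :: "'a \<Rightarrow> 'b"
  assumes "finite V"
  obtains \<phi> :: "'a \<Rightarrow> nat"
  where "\<And>a. a \<in> V \<Longrightarrow> lift \<phi> V {\<phi> a} = lift \<psi> V {\<psi> a}"
    and "\<And>X. X \<subseteq> V \<Longrightarrow> card (\<phi> ` X) = card (\<psi> ` X)"
proof -
  obtain h :: "'b \<Rightarrow> nat" where h: "inj_on h (\<psi> ` V)"
    using finite_imp_inj_to_nat_seg[OF finite_imageI[OF assms, of \<psi>]] by blast
  have "lift (h \<circ> \<psi>) V {(h \<circ> \<psi>) a} = lift \<psi> V {\<psi> a}" if a: "a \<in> V" for a
  proof -
    have "h (\<psi> b) = h (\<psi> a) \<longleftrightarrow> \<psi> b = \<psi> a" if "b \<in> V" for b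
      using inj_on_eq_iff[OF h] that a by blast
    then show ?thesis
      unfolding lift_def by auto
  qed
  moreover have "card ((h \<circ> \<psi>) ` X) = card (\<psi> ` X)" if "X \<subseteq> V" for X
    unfolding image_comp[symmetric] using that by (intro card_image inj_on_subset[OF h]) auto
  ultimately show thesis
    by (rule that)
qed

lemma tww_minimal_subcubic_no_small_quotient:
  fixes \<psi> :: "'a \<Rightarrow> 'b"
  assumes k: "k > 9" and min: "tww_minimal_subcubic k V E"
    and fibres: "\<forall>a\<in>V. card (lift \<psi> V {\<psi> a}) \<le> 3"
    and degrees: "\<forall>a\<in>V. card (\<psi> ` (nbrs V E (lift \<psi> V {\<psi> a}) - lift \<psi> V {\<psi> a})) \<le> 3"
    and smaller: "card (\<psi> ` V) < card V"
  shows False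
proof -
  have G: "simple_graph V E" "subcubic V E" and tww: "k \<le> tww V E"
    and minimal: "\<forall>(W :: nat set) F. simple_graph W F \<and> subcubic W F \<and> tww W F \<ge> k \<longrightarrow> card V \<le> card W"
    using min unfolding tww_minimal_subcubic_def by simp_all
  obtain \<phi> :: "'a \<Rightarrow> nat" where lift_\<phi>: "\<And>a. a \<in> V \<Longrightarrow> lift \<phi> V {\<phi> a} = lift \<psi> V {\<psi> a}"
    and card_\<phi>: "\<And>X. X \<subseteq> V \<Longrightarrow> card (\<phi> ` X) = card (\<psi> ` X)"
    using nat_relabelling G(1) unfolding simple_graph_def by metis
  have "nbrs V E U - U \<subseteq> V" for U
    unfolding nbrs_def by auto
  then have "subcubic (\<phi> ` V) (quot_edge \<phi> V E)"
    using degrees lift_\<phi> card_\<phi> by (intro subcubic_quot_edge[OF G(1)]) simp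
  moreover have "card (\<phi> ` V) < card V"
    using card_\<phi> smaller by simp
  ultimately have "\<not> k \<le> tww (\<phi> ` V) (quot_edge \<phi> V E)"
    using minimal[rule_format, of "\<phi> ` V" "quot_edge \<phi> V E"] simple_graph_quot_edge[OF G(1), of \<phi>]
    by (meson leD)
  moreover have "tww V E \<le> max (tww (\<phi> ` V) (quot_edge \<phi> V E)) 9"
    using tww_le_max_quotient[OF G \<open>subcubic (\<phi> ` V) _\<close>] fibres lift_\<phi> by simp
  ultimately show False
    using k tww by linarith
qed

lemma tww_minimal_subcubic_no_triangle:
  assumes k: "k > 9" and min: "tww_minimal_subcubic k V E"
    and e: "E u v" "E v w" "E w u"
  shows False
proof -
  have G: "simple_graph V E" "subcubic V E"
    using min unfolding tww_minimal_subcubic_def by simp_all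
  have sym: "E x y \<Longrightarrow> E y x" and inV: "E x y \<Longrightarrow> x \<in> V" and irrefl: "\<not> E x x" for x y
    using G(1) unfolding simple_graph_def by blast+
  have uvw: "u \<in> V" "v \<in> V" "u \<noteq> v" "v \<noteq> w" "w \<noteq> u"
    using e inV irrefl by metis+
  define \<psi> where "\<psi> a = (if a = v then u else a)" for a
  have fibre: "lift \<psi> V {\<psi> a} = (if a \<in> {u, v} then {u, v} else {a})" if "a \<in> V" for a
    using that uvw unfolding lift_def \<psi>_def by auto
  show False
  proof (rule tww_minimal_subcubic_no_small_quotient[OF k min, of \<psi>])
    show "\<forall>a\<in>V. card (lift \<psi> V {\<psi> a}) \<le> 3"
      using fibre by (simp add: card_insert_if)
    show "\<forall>a\<in>V. card (\<psi> ` (nbrs V E (lift \<psi> V {\<psi> a}) - lift \<psi> V {\<psi> a})) \<le> 3"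
    proof
      fix a assume a: "a \<in> V"
      have "{v, w, u, w} - {u, v} = {w}"
        using uvw by auto
      then have "card (\<psi> ` ({v, w, u, w} - {u, v})) \<le> 1"
        by simp
      then show "card (\<psi> ` (nbrs V E (lift \<psi> V {\<psi> a}) - lift \<psi> V {\<psi> a})) \<le> 3"
        using card_image_nbrs_pair_le[OF G e(1) sym[OF e(3)] uvw(4) sym[OF e(1)] e(2)]
          card_image_nbrs_le[OF G a] fibre[OF a] uvw by auto
    qed
    have "\<psi> ` V = V - {v}"
      using uvw unfolding \<psi>_def by auto
    moreover have "finite V"
      using G(1) unfolding simple_graph_def by simp
    ultimately show "card (\<psi> ` V) < card V"
      using card_Diff1_less[OF _ uvw(2)] by simp
  qed
qed

lemma tww_minimal_subcubic_no_C4: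
  assumes k: "k > 9" and min: "tww_minimal_subcubic k V E"
    and e: "E u w" "E w v" "E v z" "E z u" and diag: "u \<noteq> v" "w \<noteq> z"
  shows False
proof -
  have G: "simple_graph V E" "subcubic V E"
    using min unfolding tww_minimal_subcubic_def by simp_all
  have sym: "E x y \<Longrightarrow> E y x" and inV: "E x y \<Longrightarrow> x \<in> V" and irrefl: "\<not> E x x" for x y
    using G(1) unfolding simple_graph_def by blast+
  have uvwz: "u \<in> V" "v \<in> V" "w \<in> V" "z \<in> V" "u \<noteq> v" "w \<noteq> z"
    "u \<noteq> w" "w \<noteq> v" "v \<noteq> z" "z \<noteq> u"
    using e inV irrefl diag by metis+
  define \<psi> where "\<psi> a = (if a = v then u else if a = z then w else a)" for a
  have fibre: "lift \<psi> V {\<psi> a} =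
      (if a \<in> {u, v} then {u, v} else if a \<in> {w, z} then {w, z} else {a})" if "a \<in> V" for a
    using that uvwz unfolding lift_def \<psi>_def by auto
  show False
  proof (rule tww_minimal_subcubic_no_small_quotient[OF k min, of \<psi>])
    show "\<forall>a\<in>V. card (lift \<psi> V {\<psi> a}) \<le> 3"
      using fibre by (simp add: card_insert_if)
    show "\<forall>a\<in>V. card (\<psi> ` (nbrs V E (lift \<psi> V {\<psi> a}) - lift \<psi> V {\<psi> a})) \<le> 3"
    proof
      fix a assume a: "a \<in> V"
      have "{w, z, w, z} - {u, v} = {w, z}" "{u, v, u, v} - {w, z} = {u, v}"
        using uvwz by auto
      then have "card (\<psi> ` ({w, z, w, z} - {u, v})) \<le> 1" "card (\<psi> ` ({u, v, u, v} - {w, z})) \<le> 1"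
        using uvwz unfolding \<psi>_def by auto
      then show "card (\<psi> ` (nbrs V E (lift \<psi> V {\<psi> a}) - lift \<psi> V {\<psi> a})) \<le> 3"
        using card_image_nbrs_pair_le[OF G e(1) sym[OF e(4)] uvwz(6) sym[OF e(2)] e(3) uvwz(6)]
          card_image_nbrs_pair_le[OF G sym[OF e(1)] e(2) uvwz(5) e(4) sym[OF e(3)] uvwz(5)]
          card_image_nbrs_le[OF G a] fibre[OF a] uvwz by auto
    qed
    have "\<psi> ` V = V - {v, z}"
      using uvwz unfolding \<psi>_def by auto
    moreover have "finite V"
      using G(1) unfolding simple_graph_def by simp
    ultimately show "card (\<psi> ` V) < card V"
      using uvwz(2) by (intro psubset_card_mono) auto
  qed
qed

lemma short_cycle_cases:
  assumes "has_cycle V E l" "l < 5"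
  obtains u v w where "E u v" "E v w" "E w u"
    | u w v z where "E u w" "E w v" "E v z" "E z u" "u \<noteq> v" "w \<noteq> z"
proof -
  obtain f where f: "inj_on f {..<l}" "\<forall>i<l. E (f i) (f ((i + 1) mod l))" and "l \<ge> 3"
    using assms(1) unfolding has_cycle_def by blast
  have succ: "E (f i) (f (Suc i))" if "Suc i < l" for i
    using f(2)[rule_format, of i] that by (simp add: Suc_lessD)
  have last: "E (f (l - 1)) (f 0)"
    using f(2)[rule_format, of "l - 1"] \<open>l \<ge> 3\<close> by simp
  consider "l = 3" | "l = 4"
    using \<open>l \<ge> 3\<close> assms(2) by linarith
  then show thesis
  proof cases
    case 1
    then show thesis
      using that(1) succ[of 0] succ[of 1, unfolded Suc_1] last by simp
  next
    case 2
    have "f 0 \<noteq> f 2" "f 1 \<noteq> f 3"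
      using f(1) 2 by (simp_all add: inj_on_eq_iff)
    then show thesis
      using that(2) succ[of 0] succ[of 1, unfolded Suc_1] succ[of 2, unfolded Suc_numeral] last 2
      by simp
  qed
qed

lemma girth_geI:
  assumes "\<And>l. has_cycle V E l \<Longrightarrow> n \<le> l"
  shows "enat n \<le> girth V E"
  unfolding girth_def using assms by (auto intro: Inf_greatest)

theorem mainTheorem12:
  fixes k :: nat and V :: "'a set" and E :: "'a \<Rightarrow> 'a \<Rightarrow> bool"
  assumes "k > 9"
    and "simple_graph V E" and "subcubic V E" and "tww V E \<ge> k"
    and "\<forall>(W :: nat set) F. simple_graph W F \<and> subcubic W F \<and> tww W F \<ge> k \<longrightarrow> card V \<le> card W"
  shows "girth V E \<ge> 5"
proof -
  have min: "tww_minimal_subcubic k V E"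
    using assms(2-5) unfolding tww_minimal_subcubic_def by blast
  have "5 \<le> l" if "has_cycle V E l" for l
  proof (rule ccontr)
    assume "\<not> 5 \<le> l"
    then show False
      using short_cycle_cases[OF that] tww_minimal_subcubic_no_triangle[OF assms(1) min]
        tww_minimal_subcubic_no_C4[OF assms(1) min]
      by (metis not_le)
  qed
  then show ?thesis
    using girth_geI[of V E 5] by (simp add: numeral_eq_enat)
qed

end
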